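(* Let $k\ge3$ be odd and let $G$ be a $k$-uniform hypergraph. Then the number of minimal canonical H-eigenvectors of the signless Laplacian tensor $\mathcal D+\mathcal A$ corresponding to the eigenvalue $0$, counted with $\mathbf x$ and $-\mathbf x$ identified, equals the number of singletons (isolated vertices) of $G$.
   Context: A $k$-uniform hypergraph $G=(V,E)$ has vertex set $V=[n]$ ($n\ge k$) and nonempty edge set $E$ of $k$-element subsets; $E_i=\{e\in E:i\in e\}$, $d_i=|E_i|$; a singleton is a vertex with $d_i=0$. $\mathcal A$: $a_{i_1\dots i_k}=\frac1{(k-1)!}$ if $\{i_1,\dots,i_k\}\in E$, else $0$; $\mathcal D$ diagonal with $d_{i\dots i}=d_i$; so $((\mathcal D+\mathcal A)\mathbf x^{k-1})_i=d_ix_i^{k-1}+\sum_{e\in E_i}\prod_{j\in e\setminus\{i\}}x_j$. A nonzero $\mathbf x\in\mathbb C^n$ is an eigenvector of $\mathcal T$ for $\lambda$ if $(\mathcal T\mathbf x^{k-1})_i=\lambda x_i^{k-1}$ for all $i$; an H-eigenvector is a real eigenvector; canonical means $\max_i|x_i|=1$; an eigenvector of eigenvalue $0$ is minimal if no eigenvector of eigenvalue $0$ has support strictly contained in its support. *)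

theory Defs
  imports Complex_Main
begin

text \<open>Vertex set: a finite type 'a (playing the role of [n]). Vectors: functions 'a \<Rightarrow> complex.\<close>

definition uniform_hypergraph :: "nat \<Rightarrow> 'a::finite set set \<Rightarrow> bool" where
  "uniform_hypergraph k E \<longleftrightarrow> E \<noteq> {} \<and> (\<forall>e\<in>E. card e = k)"

definition edges_at :: "'a set set \<Rightarrow> 'a \<Rightarrow> 'a set set" where
  "edges_at E i = {e\<in>E. i \<in> e}"

definition hdeg :: "'a set set \<Rightarrow> 'a \<Rightarrow> nat" where
  "hdeg E i = card (edges_at E i)"

definition singletons :: "'a::finite set set \<Rightarrow> 'a set" where
  "singletons E = {i. hdeg E i = 0}"

text \<open>((D + A) x^(k-1))_i\<close>
definition signless_lap_apply :: "nat \<Rightarrow> 'a set set \<Rightarrow> ('a \<Rightarrow> complex) \<Rightarrow> 'a \<Rightarrow> complex" where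
  "signless_lap_apply k E x i =
     of_nat (hdeg E i) * x i ^ (k - 1) + (\<Sum>e\<in>edges_at E i. \<Prod>j\<in>e - {i}. x j)"

definition is_eigvec :: "nat \<Rightarrow> 'a set set \<Rightarrow> complex \<Rightarrow> ('a \<Rightarrow> complex) \<Rightarrow> bool" where
  "is_eigvec k E lam x \<longleftrightarrow> x \<noteq> (\<lambda>_. 0) \<and>
     (\<forall>i. signless_lap_apply k E x i = lam * x i ^ (k - 1))"

definition is_H_eigvec :: "nat \<Rightarrow> 'a set set \<Rightarrow> complex \<Rightarrow> ('a \<Rightarrow> complex) \<Rightarrow> bool" where
  "is_H_eigvec k E lam x \<longleftrightarrow> is_eigvec k E lam x \<and> (\<forall>i. x i \<in> \<real>)"

definition canonical :: "('a::finite \<Rightarrow> complex) \<Rightarrow> bool" where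
  "canonical x \<longleftrightarrow> Max (range (\<lambda>i. cmod (x i))) = 1"

definition vsupp :: "('a \<Rightarrow> complex) \<Rightarrow> 'a set" where
  "vsupp x = {i. x i \<noteq> 0}"

definition minimal_zero_eigvec :: "nat \<Rightarrow> 'a set set \<Rightarrow> ('a \<Rightarrow> complex) \<Rightarrow> bool" where
  "minimal_zero_eigvec k E x \<longleftrightarrow> is_eigvec k E 0 x \<and>
     \<not> (\<exists>y. is_eigvec k E 0 y \<and> vsupp y \<subset> vsupp x)"

definition min_can_H0 :: "nat \<Rightarrow> 'a::finite set set \<Rightarrow> ('a \<Rightarrow> complex) set" where
  "min_can_H0 k E = {x. is_H_eigvec k E 0 x \<and> canonical x \<and> minimal_zero_eigvec k E x}"

end

theory Submission imports Defs begin

text \<open>Let \<open>x\<close> be a real eigenvector for the eigenvalue 0 and \<open>m = max |x_j| > 0\<close>, attained at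
  \<open>i\<close>. As \<open>k - 1\<close> is even, the equation at \<open>i\<close> reads \<open>d_i m^(k-1) + \<Sum>_(e\<ni>i) \<Prod>_(e-{i}) x = 0\<close>,
  and every product is at least \<open>-m^(k-1)\<close>, so every one of them equals \<open>-m^(k-1)\<close>. If \<open>i\<close>
  lay on an edge \<open>e\<close>, then \<open>|\<Prod>_e x| = m^k\<close> forces \<open>|x_l| = m\<close> on \<open>e\<close>; the same argument
  at every \<open>l \<in> e\<close> gives \<open>\<Prod>_e x = -m^(k-1) x_l\<close>, so \<open>x\<close> is constant on \<open>e\<close> and
  \<open>\<Prod>_(e-{i}) x = x_i^(k-1) = m^(k-1) > 0\<close>, a contradiction. Hence every such \<open>x\<close> is nonzero
  at a singleton; the minimal canonical ones are therefore exactly \<open>\<plusminus>\<close> the unit vectors at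
  singletons.\<close>

lemma sum_eq_card_mult_lower_bound:
  fixes f :: "'a \<Rightarrow> 'b::linordered_idom"
  assumes "finite A" and "\<And>a. a \<in> A \<Longrightarrow> c \<le> f a" and "sum f A = of_nat (card A) * c"
    and "a \<in> A"
  shows "f a = c"
proof -
  have "(\<Sum>a\<in>A. f a - c) = 0"
    using assms(3) by (simp add: sum_subtractf)
  then have "\<forall>a\<in>A. f a - c = 0"
    using assms(1,2) by (subst (asm) sum_nonneg_eq_0_iff) auto
  then show ?thesis using assms(4) by simp
qed

lemma abs_prod_le_power_card:
  fixes f :: "'a \<Rightarrow> 'b::linordered_field"
  assumes "\<And>l. l \<in> A \<Longrightarrow> \<bar>f l\<bar> \<le> m"
  shows "\<bar>prod f A\<bar> \<le> m ^ card A"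
proof -
  have "\<bar>prod f A\<bar> = (\<Prod>l\<in>A. \<bar>f l\<bar>)" by (rule abs_prod)
  also have "\<dots> \<le> (\<Prod>l\<in>A. m)" by (rule prod_mono) (simp add: assms)
  finally show ?thesis by simp
qed

lemma abs_eq_bound_if_abs_prod_eq_power_card:
  fixes f :: "'a \<Rightarrow> 'b::linordered_field"
  assumes "finite A" and bound: "\<And>l. l \<in> A \<Longrightarrow> \<bar>f l\<bar> \<le> m"
    and prod_eq: "\<bar>prod f A\<bar> = m ^ card A" and "m > 0" and "l \<in> A"
  shows "\<bar>f l\<bar> = m"
proof -
  have card_A: "card A = Suc (card (A - {l}))"
    using card_Suc_Diff1[OF assms(1,5)] by simp
  have "prod f A = f l * prod f (A - {l})" by (rule prod.remove[OF assms(1,5)])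
  then have "m * m ^ card (A - {l}) = \<bar>f l * prod f (A - {l})\<bar>"
    using prod_eq card_A by simp
  also have "\<dots> \<le> \<bar>f l\<bar> * m ^ card (A - {l})"
    unfolding abs_mult by (intro mult_left_mono abs_prod_le_power_card) (auto intro: bound)
  finally have "m \<le> \<bar>f l\<bar>" using \<open>m > 0\<close> by simp
  with bound[OF \<open>l \<in> A\<close>] show ?thesis by simp
qed

lemma real_zero_eigvec_nonzero_at_singleton:
  fixes x :: "'a::finite \<Rightarrow> real" and E :: "'a set set"
  assumes "odd k" and card_edge: "\<forall>e\<in>E. card e = k"
    and eigen: "\<And>i. real (hdeg E i) * x i ^ (k - 1) + (\<Sum>e\<in>edges_at E i. \<Prod>j\<in>e - {i}. x j) = 0"
    and "x j\<^sub>0 \<noteq> 0"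
  shows "\<exists>i\<in>singletons E. x i \<noteq> 0"
proof -
  define m where "m = Max (range (\<lambda>j. \<bar>x j\<bar>))"
  have bound: "\<And>j. \<bar>x j\<bar> \<le> m" unfolding m_def by (rule Max_ge) auto
  have "m \<in> range (\<lambda>j. \<bar>x j\<bar>)" unfolding m_def by (rule Max_in) auto
  then obtain i where x_i: "\<bar>x i\<bar> = m" by auto
  have "m > 0" using bound[of j\<^sub>0] \<open>x j\<^sub>0 \<noteq> 0\<close> by linarith
  have even_k1: "even (k - 1)" using \<open>odd k\<close> by simp
  have card_edge_minus: "card (e - {j}) = k - 1" if "e \<in> edges_at E j" for e j
    using that card_edge by (simp add: edges_at_def card_Diff_singleton)
  have edge_prod: "(\<Prod>l\<in>e - {j}. x l) = - (m ^ (k - 1))"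
    if "\<bar>x j\<bar> = m" and "e \<in> edges_at E j" for j e
  proof (rule sum_eq_card_mult_lower_bound[OF _ _ _ \<open>e \<in> edges_at E j\<close>])
    show "- (m ^ (k - 1)) \<le> (\<Prod>l\<in>e' - {j}. x l)" if "e' \<in> edges_at E j" for e'
      using abs_prod_le_power_card[of "e' - {j}" x m] bound card_edge_minus[OF that]
      by (simp add: abs_le_iff)
    have "x j ^ (k - 1) = m ^ (k - 1)"
      using \<open>\<bar>x j\<bar> = m\<close> power_even_abs[OF even_k1, of "x j"] by simp
    then show "(\<Sum>e'\<in>edges_at E j. \<Prod>l\<in>e' - {j}. x l) = of_nat (card (edges_at E j)) * - (m ^ (k - 1))"
      using eigen[of j] by (simp add: hdeg_def eq_neg_iff_add_eq_0 add.commute)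
  qed simp
  show ?thesis
  proof (rule ccontr)
    assume "\<not> ?thesis"
    with x_i \<open>m > 0\<close> have "hdeg E i \<noteq> 0" by (auto simp: singletons_def)
    then obtain e where e_i: "e \<in> edges_at E i" by (auto simp: hdeg_def)
    then have "i \<in> e" by (simp add: edges_at_def)
    have prod_split: "(\<Prod>j\<in>e. x j) = x l * (\<Prod>j\<in>e - {l}. x j)" if "l \<in> e" for l
      using that by (simp add: prod.remove)
    have prod_e: "(\<Prod>j\<in>e. x j) = - (m ^ (k - 1)) * x i"
      using prod_split[OF \<open>i \<in> e\<close>] edge_prod[OF x_i e_i] by simp
    moreover have "m ^ card e = m * m ^ (k - 1)"
    proof -
      have "card e = Suc (k - 1)" using e_i card_edge \<open>odd k\<close> by (simp add: edges_at_def)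
      then show ?thesis by simp
    qed
    ultimately have abs_prod_e: "\<bar>\<Prod>j\<in>e. x j\<bar> = m ^ card e"
      using x_i \<open>m > 0\<close> by (simp add: abs_mult mult.commute)
    have abs_on_e: "\<bar>x l\<bar> = m" if "l \<in> e" for l
      using abs_eq_bound_if_abs_prod_eq_power_card[of e x m l] bound abs_prod_e \<open>m > 0\<close> that
      by simp
    have "x l = x i" if "l \<in> e" for l
    proof -
      have "e \<in> edges_at E l" using that e_i by (simp add: edges_at_def)
      then have "(\<Prod>j\<in>e. x j) = - (m ^ (k - 1)) * x l"
        using prod_split[OF that] edge_prod[OF abs_on_e[OF that]] by simp
      with prod_e show ?thesis using \<open>m > 0\<close> by simp
    qed
    then have "(\<Prod>l\<in>e - {i}. x l) = x i ^ (k - 1)"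
      using card_edge_minus[OF e_i] by simp
    also have "\<dots> = m ^ (k - 1)"
      using x_i power_even_abs[OF even_k1, of "x i"] by simp
    finally show False using edge_prod[OF x_i e_i] \<open>m > 0\<close> by simp
  qed
qed

definition unit_vec :: "'a \<Rightarrow> complex \<Rightarrow> 'a \<Rightarrow> complex" where
  "unit_vec i c = (\<lambda>j. if j = i then c else 0)"

lemma vsupp_unit_vec: "c \<noteq> 0 \<Longrightarrow> vsupp (unit_vec i c) = {i}"
  by (auto simp: vsupp_def unit_vec_def)

lemma unit_vec_is_zero_eigvec:
  assumes "k \<ge> 3" and card_edge: "\<forall>e\<in>E. card e = k" and "i \<in> singletons E" and "c \<noteq> 0"
  shows "is_eigvec k E 0 (unit_vec i c)"
proof -
  have no_edge_i: "edges_at E i = {}" using \<open>i \<in> singletons E\<close> by (simp add: singletons_def hdeg_def)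
  have prod_vanishes: "(\<Prod>l\<in>e - {j}. unit_vec i c l) = 0" if "e \<in> edges_at E j" for e j
  proof -
    have "e \<in> E" "j \<in> e" using that by (auto simp: edges_at_def)
    then have "i \<notin> e" using no_edge_i by (auto simp: edges_at_def)
    have "card (e - {j}) \<noteq> 0" using \<open>e \<in> E\<close> \<open>j \<in> e\<close> card_edge \<open>k \<ge> 3\<close> by simp
    then obtain l where "l \<in> e - {j}" by (metis card.empty ex_in_conv)
    with \<open>i \<notin> e\<close> show ?thesis by (intro prod_zero) (auto simp: unit_vec_def)
  qed
  have "signless_lap_apply k E (unit_vec i c) j = 0" for j
  proof (cases "j = i")
    case True
    then show ?thesis by (simp add: signless_lap_apply_def no_edge_i hdeg_def)
  next
    case False
    have "(\<Sum>e\<in>edges_at E j. \<Prod>l\<in>e - {j}. unit_vec i c l) = 0"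
      by (rule sum.neutral) (use prod_vanishes in blast)
    moreover have "unit_vec i c j = 0" using False by (simp add: unit_vec_def)
    ultimately show ?thesis using \<open>k \<ge> 3\<close> by (simp add: signless_lap_apply_def)
  qed
  moreover have "unit_vec i c \<noteq> (\<lambda>_. 0)" using \<open>c \<noteq> 0\<close> by (metis unit_vec_def)
  ultimately show ?thesis by (simp add: is_eigvec_def)
qed

lemma signless_lap_apply_of_real:
  "signless_lap_apply k E (\<lambda>j. of_real (x j)) i
     = of_real (real (hdeg E i) * x i ^ (k - 1) + (\<Sum>e\<in>edges_at E i. \<Prod>j\<in>e - {i}. x j))"
  by (simp add: signless_lap_apply_def)

lemma min_can_H0_imp_unit_vec:
  fixes E :: "'a::finite set set"
  assumes "k \<ge> 3" and "odd k" and card_edge: "\<forall>e\<in>E. card e = k" and "x \<in> min_can_H0 k E"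
  shows "\<exists>i\<in>singletons E. x = unit_vec i 1 \<or> x = unit_vec i (-1)"
proof -
  have "is_eigvec k E 0 x" and real_x: "\<forall>i. x i \<in> \<real>" and "canonical x"
    and minimal: "minimal_zero_eigvec k E x"
    using \<open>x \<in> min_can_H0 k E\<close> by (auto simp: min_can_H0_def is_H_eigvec_def)
  define r where "r j = Re (x j)" for j
  have x_r: "x = (\<lambda>j. of_real (r j))" using real_x by (auto simp: r_def of_real_Re)
  have "x \<noteq> (\<lambda>_. 0)" using \<open>is_eigvec k E 0 x\<close> by (simp add: is_eigvec_def)
  then obtain j\<^sub>0 where "r j\<^sub>0 \<noteq> 0" by (auto simp: x_r fun_eq_iff)
  moreover have "real (hdeg E i) * r i ^ (k - 1) + (\<Sum>e\<in>edges_at E i. \<Prod>j\<in>e - {i}. r j) = 0" for i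
  proof -
    have "signless_lap_apply k E (\<lambda>j. of_real (r j)) i = 0"
      using \<open>is_eigvec k E 0 x\<close> \<open>k \<ge> 3\<close> by (simp add: is_eigvec_def flip: x_r)
    then show ?thesis by (simp only: signless_lap_apply_of_real of_real_eq_0_iff)
  qed
  ultimately obtain i where "i \<in> singletons E" and "r i \<noteq> 0"
    using real_zero_eigvec_nonzero_at_singleton[OF \<open>odd k\<close> card_edge] by blast
  have "is_eigvec k E 0 (unit_vec i 1)"
    using unit_vec_is_zero_eigvec[OF \<open>k \<ge> 3\<close> card_edge \<open>i \<in> singletons E\<close>] by simp
  with minimal have "\<not> {i} \<subset> vsupp x"
    using vsupp_unit_vec[of 1 i] unfolding minimal_zero_eigvec_def by auto
  moreover have "{i} \<subseteq> vsupp x" using \<open>r i \<noteq> 0\<close> by (simp add: vsupp_def x_r)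
  ultimately have "vsupp x = {i}" by blast
  then have x_outside: "r j = 0" if "j \<noteq> i" for j
    using that by (auto simp: vsupp_def x_r)
  then have x_i: "x = unit_vec i (x i)" by (auto simp: unit_vec_def fun_eq_iff x_r)
  have "\<bar>r j\<bar> \<le> \<bar>r i\<bar>" for j using x_outside[of j] by (cases "j = i") auto
  then have "Max (range (\<lambda>j. cmod (x j))) = \<bar>r i\<bar>"
    by (intro Max_eqI) (auto simp: x_r)
  then have "r i = 1 \<or> r i = -1" using \<open>canonical x\<close> by (auto simp: canonical_def)
  then have "x i = 1 \<or> x i = -1" by (auto simp: x_r)
  with x_i \<open>i \<in> singletons E\<close> show ?thesis by metis
qed

lemma unit_vec_in_min_can_H0:
  fixes E :: "'a::finite set set"
  assumes "k \<ge> 3" and card_edge: "\<forall>e\<in>E. card e = k" and "i \<in> singletons E"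
    and c: "c = 1 \<or> c = -1"
  shows "unit_vec i c \<in> min_can_H0 k E"
proof -
  have "c \<noteq> 0" using c by auto
  have "is_eigvec k E 0 (unit_vec i c)"
    using unit_vec_is_zero_eigvec[OF \<open>k \<ge> 3\<close> card_edge \<open>i \<in> singletons E\<close> \<open>c \<noteq> 0\<close>] .
  moreover have "\<forall>j. unit_vec i c j \<in> \<real>" using c by (auto simp: unit_vec_def)
  moreover have "Max (range (\<lambda>j. cmod (unit_vec i c j))) = 1"
    by (rule Max_eqI) (use c in \<open>auto simp: unit_vec_def\<close>)
  moreover have "\<not> (\<exists>y. is_eigvec k E 0 y \<and> vsupp y \<subset> vsupp (unit_vec i c))"
  proof
    assume "\<exists>y. is_eigvec k E 0 y \<and> vsupp y \<subset> vsupp (unit_vec i c)"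
    then obtain y where "is_eigvec k E 0 y" and "vsupp y \<subset> {i}"
      unfolding vsupp_unit_vec[OF \<open>c \<noteq> 0\<close>] by blast
    then have "vsupp y = {}" and "y \<noteq> (\<lambda>_. 0)" by (auto simp: is_eigvec_def)
    then show False by (auto simp: vsupp_def fun_eq_iff)
  qed
  ultimately show ?thesis
    by (simp add: min_can_H0_def is_H_eigvec_def canonical_def minimal_zero_eigvec_def)
qed

lemma sign_classes_min_can_H0:
  fixes E :: "'a::finite set set"
  assumes "k \<ge> 3" and "odd k" and card_edge: "\<forall>e\<in>E. card e = k"
  shows "(\<lambda>x. {x, - x}) ` min_can_H0 k E = (\<lambda>i. {unit_vec i 1, unit_vec i (-1)}) ` singletons E"
proof -
  have neg_unit_vec: "- unit_vec i c = unit_vec i (- c)" for i c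
    by (auto simp: unit_vec_def)
  show ?thesis
  proof (intro equalityI subsetI)
    fix X assume "X \<in> (\<lambda>x. {x, - x}) ` min_can_H0 k E"
    then obtain x where "x \<in> min_can_H0 k E" and X: "X = {x, - x}" by blast
    then obtain i where "i \<in> singletons E" and "x = unit_vec i 1 \<or> x = unit_vec i (-1)"
      using min_can_H0_imp_unit_vec[OF assms] by blast
    then have "X = {unit_vec i 1, unit_vec i (-1)}" using X by (auto simp: neg_unit_vec)
    with \<open>i \<in> singletons E\<close> show "X \<in> (\<lambda>i. {unit_vec i 1, unit_vec i (-1)}) ` singletons E"
      by blast
  next
    fix X assume "X \<in> (\<lambda>i. {unit_vec i 1, unit_vec i (-1)}) ` singletons E"
    then obtain i where "i \<in> singletons E" and "X = {unit_vec i 1, unit_vec i (-1)}" by blast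
    then have "X = (\<lambda>x. {x, - x}) (unit_vec i 1)" by (simp add: neg_unit_vec)
    moreover have "unit_vec i 1 \<in> min_can_H0 k E"
      using unit_vec_in_min_can_H0[OF \<open>k \<ge> 3\<close> card_edge \<open>i \<in> singletons E\<close>] by simp
    ultimately show "X \<in> (\<lambda>x. {x, - x}) ` min_can_H0 k E" by (rule image_eqI)
  qed
qed

lemma inj_on_unit_vec_pair: "inj_on (\<lambda>i. {unit_vec i 1, unit_vec i (-1)}) S"
proof (rule inj_onI)
  fix i j assume "{unit_vec i 1, unit_vec i (-1)} = {unit_vec j 1, unit_vec j (-1)}"
  then have "unit_vec i 1 \<in> {unit_vec j 1, unit_vec j (-1)}" by (metis insertI1)
  then have "unit_vec i 1 i \<in> {unit_vec j 1 i, unit_vec j (-1) i}" by auto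
  then show "i = j" by (auto simp: unit_vec_def split: if_splits)
qed

theorem corollary5p1:
  fixes k :: nat and E :: "'a::finite set set"
  assumes "k \<ge> 3" and "odd k" and "uniform_hypergraph k E"
  shows "finite ((\<lambda>x. {x, - x}) ` min_can_H0 k E)
         \<and> card ((\<lambda>x. {x, - x}) ` min_can_H0 k E) = card (singletons E)"
proof -
  have "\<forall>e\<in>E. card e = k" using assms(3) by (simp add: uniform_hypergraph_def)
  then have "(\<lambda>x. {x, - x}) ` min_can_H0 k E = (\<lambda>i. {unit_vec i 1, unit_vec i (-1)}) ` singletons E"
    using sign_classes_min_can_H0 assms(1,2) by blast
  then show ?thesis by (simp add: card_image inj_on_unit_vec_pair)
qed

end
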